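(* Let $a,b,c\in\mathbb{R}$, $\lambda>0$, and consider the scalar linear jump-diffusion test equation $$dX(t)=aX(t^-)\,dt+bX(t^-)\,dW(t)+cX(t^-)\,dN(t),\qquad X(0)=X_0,$$ with $\mathbb{E}|X_0|^2<\infty$. Let $l:=2a+b^2+\lambda c(2+c)$ and assume $l<0$. Then $a+\lambda c<0$, and the semi-tamed scheme applied to this equation, namely (with $u(x)=ax$, $v\equiv 0$) $$Y_{n+1}=Y_n+aY_n\Delta t+bY_n\Delta W_n+cY_n\Delta N_n,\qquad Y_0=X_0,$$ is mean-square stable (i.e. $\lim_{n\to\infty}\mathbb{E}(Y_n^2)=0$) if and only if $$\Delta t<\frac{-l}{(a+\lambda c)^2}.$$
   Context: $(\Omega,\mathcal F,\mathbb P)$ is a complete probability space with filtration $(\mathcal F_t)_{t\ge0}$; $W$ is a one-dimensional standard Brownian motion and $N$ is a Poisson process with intensity $\lambda$, independent of $W$ (and of $X_0$). $\Delta t>0$ is the step size, $t_n=n\Delta t$, $\Delta W_n=W(t_{n+1})-W(t_n)$, $\Delta N_n=N(t_{n+1})-N(t_n)$. In general, for $dX=f(X)dt+g(X)dW+h(X)dN$ with $f=u+v$ ($u$ the globally Lipschitz part, $v$ the non-globally Lipschitz part), the semi-tamed scheme is $Y_{n+1}=Y_n+u(Y_n)\Delta t+\frac{\Delta t\, v(Y_n)}{1+\Delta t\|v(Y_n)\|}+g(Y_n)\Delta W_n+h(Y_n)\Delta N_n$; for the linear test equation $u(x)=ax$, $v\equiv0$. The condition $l<0$ is equivalent to mean-square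 stability of the exact solution. *)

theory Defs
  imports "HOL-Probability.Probability"
begin

datatype incr_idx = IX0 | IW nat | IN nat

(* Standard Brownian motion (one-dimensional) on the probability space M:
   measurable, starts at 0 a.s., a.s. continuous paths, Gaussian increments
   W t - W s ~ N(0, t - s).  (Independence of increments is part of
   joint_indep below.) *)
definition is_brownian :: "'a measure \<Rightarrow> (real \<Rightarrow> 'a \<Rightarrow> real) \<Rightarrow> bool" where
  "is_brownian M W \<longleftrightarrow>
     (\<forall>t. W t \<in> borel_measurable M) \<and>
     (AE \<omega> in M. W 0 \<omega> = 0) \<and>
     (AE \<omega> in M. continuous_on {0..} (\<lambda>t. W t \<omega>)) \<and>
     (\<forall>s t. 0 \<le> s \<and> s < t \<longrightarrow>
        distributed M lborel (\<lambda>\<omega>. W t \<omega> - W s \<omega>) (normal_density 0 (sqrt (t - s))))"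

definition is_poisson :: "'a measure \<Rightarrow> real \<Rightarrow> (real \<Rightarrow> 'a \<Rightarrow> real) \<Rightarrow> bool" where
  "is_poisson M lam N \<longleftrightarrow>
     (\<forall>t. N t \<in> borel_measurable M) \<and>
     (AE \<omega> in M. N 0 \<omega> = 0) \<and>
     (AE \<omega> in M. mono_on {0..} (\<lambda>t. N t \<omega>) \<and>
                 (\<forall>t\<ge>0. continuous (at_right t) (\<lambda>s. N s \<omega>))) \<and>
     (\<forall>s t (k::nat). 0 \<le> s \<and> s < t \<longrightarrow>
        measure M {\<omega> \<in> space M. N t \<omega> - N s \<omega> = real k}
          = exp (- lam * (t - s)) * (lam * (t - s)) ^ k / fact k)"

(* This encodes
   independent increments of W and of N, independence of W and N, and
   independence of both from X0. *)
definition joint_indep ::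
  "'a measure \<Rightarrow> ('a \<Rightarrow> real) \<Rightarrow> (real \<Rightarrow> 'a \<Rightarrow> real) \<Rightarrow> (real \<Rightarrow> 'a \<Rightarrow> real) \<Rightarrow> bool" where
  "joint_indep M X0 W N \<longleftrightarrow>
     (\<forall>(ts::nat \<Rightarrow> real) k. 0 \<le> ts 0 \<and> (\<forall>j<k. ts j < ts (Suc j)) \<longrightarrow>
        prob_space.indep_vars M (\<lambda>_. borel)
          (\<lambda>i \<omega>. case i of IX0 \<Rightarrow> X0 \<omega>
                          | IW j \<Rightarrow> W (ts (Suc j)) \<omega> - W (ts j) \<omega>
                          | IN j \<Rightarrow> N (ts (Suc j)) \<omega> - N (ts j) \<omega>)
          ({IX0} \<union> IW ` {..<k} \<union> IN ` {..<k}))"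

(* General scalar semi-tamed scheme for dX = (u+v)(X)dt + g(X)dW + h(X)dN,
   step size dt, t_n = n dt. *)
fun semi_tamed ::
  "(real \<Rightarrow> real) \<Rightarrow> (real \<Rightarrow> real) \<Rightarrow> (real \<Rightarrow> real) \<Rightarrow> (real \<Rightarrow> real) \<Rightarrow> real \<Rightarrow>
   (real \<Rightarrow> 'a \<Rightarrow> real) \<Rightarrow> (real \<Rightarrow> 'a \<Rightarrow> real) \<Rightarrow> ('a \<Rightarrow> real) \<Rightarrow> nat \<Rightarrow> 'a \<Rightarrow> real" where
  "semi_tamed u v g h dt W N X0 0 \<omega> = X0 \<omega>"
| "semi_tamed u v g h dt W N X0 (Suc n) \<omega> =
     (let y = semi_tamed u v g h dt W N X0 n \<omega> in
      y + u y * dt + dt * v y / (1 + dt * \<bar>v y\<bar>)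
        + g y * (W (real (Suc n) * dt) \<omega> - W (real n * dt) \<omega>)
        + h y * (N (real (Suc n) * dt) \<omega> - N (real n * dt) \<omega>))"

definition admissible_init ::
  "'a measure \<Rightarrow> ('a \<Rightarrow> real) \<Rightarrow> (real \<Rightarrow> 'a \<Rightarrow> real) \<Rightarrow> (real \<Rightarrow> 'a \<Rightarrow> real) \<Rightarrow> bool" where
  "admissible_init M X0 W N \<longleftrightarrow>
     X0 \<in> borel_measurable M \<and> integrable M (\<lambda>\<omega>. (X0 \<omega>)\<^sup>2) \<and> joint_indep M X0 W N"

definition ms_stable ::
  "'a measure \<Rightarrow> (real \<Rightarrow> real) \<Rightarrow> (real \<Rightarrow> real) \<Rightarrow> (real \<Rightarrow> real) \<Rightarrow> (real \<Rightarrow> real) \<Rightarrow> real \<Rightarrow>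
   (real \<Rightarrow> 'a \<Rightarrow> real) \<Rightarrow> (real \<Rightarrow> 'a \<Rightarrow> real) \<Rightarrow> bool" where
  "ms_stable M u v g h dt W N \<longleftrightarrow>
     (\<forall>X0. admissible_init M X0 W N \<longrightarrow>
        (\<lambda>n. integral\<^sup>L M (\<lambda>\<omega>. (semi_tamed u v g h dt W N X0 n \<omega>)\<^sup>2)) \<longlonglongrightarrow> 0)"

end

theory Submission
  imports Defs
begin

text \<open>For the linear test equation the scheme is multiplicative,
  \<open>Y\<^sub>n\<^sub>+\<^sub>1 = Y\<^sub>n (1 + a \<Delta>t + b \<Delta>W\<^sub>n + c \<Delta>N\<^sub>n)\<close>, and the factor is independent of \<open>Y\<^sub>n\<close>.
  Hence \<open>E Y\<^sub>n\<^sup>2 = E X\<^sub>0\<^sup>2 q\<^sup>n\<close> where \<open>q\<close> is the second moment of the factor; the Gaussian and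
  Poisson moments give \<open>q = (1 + (a + \<lambda>c) \<Delta>t)\<^sup>2 + (b\<^sup>2 + \<lambda>c\<^sup>2) \<Delta>t = 1 + l \<Delta>t + (a + \<lambda>c)\<^sup>2 \<Delta>t\<^sup>2 \<ge> 0\<close>.
  So the scheme is mean-square stable iff \<open>q < 1\<close> (necessity by taking \<open>X\<^sub>0 = 1\<close>), which
  is the step-size bound. Since \<open>l = 2(a + \<lambda>c) + b\<^sup>2 + \<lambda>c\<^sup>2\<close>, \<open>l < 0\<close> forces \<open>a + \<lambda>c < 0\<close>.\<close>

definition poisson_distributed :: "'a measure \<Rightarrow> ('a \<Rightarrow> real) \<Rightarrow> real \<Rightarrow> bool" where
  "poisson_distributed M D \<mu> \<longleftrightarrow> D \<in> borel_measurable M \<and>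
     (\<forall>k::nat. measure M {\<omega> \<in> space M. D \<omega> = real k} = exp (- \<mu>) * \<mu> ^ k / fact k)"

definition grid_increment :: "real \<Rightarrow> (real \<Rightarrow> 'a \<Rightarrow> real) \<Rightarrow> nat \<Rightarrow> 'a \<Rightarrow> real" where
  "grid_increment dt Z j \<omega> = Z (real (Suc j) * dt) \<omega> - Z (real j * dt) \<omega>"

definition grid_noise ::
  "real \<Rightarrow> ('a \<Rightarrow> real) \<Rightarrow> (real \<Rightarrow> 'a \<Rightarrow> real) \<Rightarrow> (real \<Rightarrow> 'a \<Rightarrow> real) \<Rightarrow> incr_idx \<Rightarrow> 'a \<Rightarrow> real" where
  "grid_noise dt X0 W N i = (case i of IX0 \<Rightarrow> X0 | IW j \<Rightarrow> grid_increment dt W j | IN j \<Rightarrow> grid_increment dt N j)"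

definition linear_step_factor ::
  "real \<Rightarrow> real \<Rightarrow> real \<Rightarrow> real \<Rightarrow> (real \<Rightarrow> 'a \<Rightarrow> real) \<Rightarrow> (real \<Rightarrow> 'a \<Rightarrow> real) \<Rightarrow> nat \<Rightarrow> 'a \<Rightarrow> real" where
  "linear_step_factor a b c dt W N j \<omega> = 1 + a * dt + b * grid_increment dt W j \<omega> + c * grid_increment dt N j \<omega>"

lemma semi_tamed_linear:
  "semi_tamed (\<lambda>x. a * x) (\<lambda>_. 0) (\<lambda>x. b * x) (\<lambda>x. c * x) dt W N X0 n \<omega>
     = X0 \<omega> * (\<Prod>j<n. linear_step_factor a b c dt W N j \<omega>)"
  by (induction n) (simp_all add: linear_step_factor_def grid_increment_def Let_def algebra_simps)

lemma poisson_weights_sums: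
  fixes \<mu> :: real
  defines "p \<equiv> \<lambda>k::nat. exp (- \<mu>) * \<mu> ^ k / fact k"
  shows "p sums 1" and "(\<lambda>k. real k * p k) sums \<mu>" and "(\<lambda>k. (real k)\<^sup>2 * p k) sums (\<mu> + \<mu>\<^sup>2)"
proof -
  have "(\<lambda>k. exp (- \<mu>) * (\<mu> ^ k / fact k)) sums (exp (- \<mu>) * exp \<mu>)"
    using exp_converges[of \<mu>] by (intro sums_mult) (simp add: divide_inverse_commute)
  then show p1: "p sums 1"
    by (simp add: p_def exp_minus)
  have shift: "real (Suc k) * p (Suc k) = \<mu> * p k" for k
    by (simp add: p_def divide_simps)
  have "(\<lambda>k. real (Suc k) * p (Suc k)) sums (\<mu> * 1)"
    unfolding shift by (rule sums_mult[OF p1])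
  then show p2: "(\<lambda>k. real k * p k) sums \<mu>"
    using sums_Suc_iff[of "\<lambda>k. real k * p k" \<mu>] by simp
  have "(real (Suc k))\<^sup>2 * p (Suc k) = real (Suc k) * (\<mu> * p k)" for k
    by (simp flip: shift add: power2_eq_square)
  then have "(real (Suc k))\<^sup>2 * p (Suc k) = \<mu> * (real k * p k) + \<mu> * p k" for k
    by (simp add: algebra_simps)
  then have "(\<lambda>k. (real (Suc k))\<^sup>2 * p (Suc k)) sums (\<mu> * \<mu> + \<mu> * 1)"
    using sums_add[OF sums_mult[OF p2] sums_mult[OF p1]] by simp
  then show "(\<lambda>k. (real k)\<^sup>2 * p k) sums (\<mu> + \<mu>\<^sup>2)"
    using sums_Suc_iff[of "\<lambda>k. (real k)\<^sup>2 * p k" "\<mu> + \<mu>\<^sup>2"] by (simp add: power2_eq_square algebra_simps)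
qed

context prob_space
begin

lemma AE_poisson_distributed_nat:
  assumes D: "poisson_distributed M D \<mu>"
  shows "AE \<omega> in M. \<exists>k::nat. D \<omega> = real k"
proof -
  have [measurable]: "D \<in> borel_measurable M"
    using D by (simp add: poisson_distributed_def)
  define A where "A k = {\<omega> \<in> space M. D \<omega> = real k}" for k :: nat
  have [measurable]: "A k \<in> sets M" for k
    unfolding A_def by measurable
  have "(\<lambda>k. prob (A k)) sums prob (\<Union>k. A k)"
    by (rule measure_UNION) (auto simp: disjoint_family_on_def A_def)
  moreover have "(\<lambda>k. prob (A k)) sums 1"
    using poisson_weights_sums(1)[of \<mu>] D by (simp add: A_def poisson_distributed_def)
  ultimately have "AE \<omega> in M. \<omega> \<in> (\<Union>k. A k)"
    using sums_unique2 by (metis AE_prob_1)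
  then show ?thesis
    by (auto simp: A_def)
qed

lemma nn_integral_poisson_distributed:
  assumes D: "poisson_distributed M D \<mu>" and "0 \<le> \<mu>" and [measurable]: "g \<in> borel_measurable borel"
  shows "(\<integral>\<^sup>+\<omega>. ennreal (g (D \<omega>)) \<partial>M) = (\<Sum>k. ennreal (g (real k) * (exp (- \<mu>) * \<mu> ^ k / fact k)))"
proof -
  have [measurable]: "D \<in> borel_measurable M"
    using D by (simp add: poisson_distributed_def)
  define A where "A k = {\<omega> \<in> space M. D \<omega> = real k}" for k :: nat
  have [measurable]: "A k \<in> sets M" for k
    unfolding A_def by measurable
  have "AE \<omega> in M. ennreal (g (D \<omega>)) = (\<Sum>k. ennreal (g (real k)) * indicator (A k) \<omega>)"
    using AE_poisson_distributed_nat[OF D] AE_space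
  proof eventually_elim
    case (elim \<omega>)
    then obtain k0 where "D \<omega> = real k0" by auto
    then have "(\<lambda>k. ennreal (g (real k)) * indicator (A k) \<omega>) = (\<lambda>k. if k = k0 then ennreal (g (D \<omega>)) else 0)"
      using elim by (auto simp: A_def fun_eq_iff indicator_def)
    then show ?case
      using sums_single[of k0 "\<lambda>_. ennreal (g (D \<omega>))"] by (simp add: sums_iff)
  qed
  then have "(\<integral>\<^sup>+\<omega>. ennreal (g (D \<omega>)) \<partial>M) = (\<Sum>k. \<integral>\<^sup>+\<omega>. ennreal (g (real k)) * indicator (A k) \<omega> \<partial>M)"
    by (simp add: nn_integral_cong_AE nn_integral_suminf)
  also have "\<dots> = (\<Sum>k. ennreal (g (real k) * (exp (- \<mu>) * \<mu> ^ k / fact k)))"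
    using D \<open>0 \<le> \<mu>\<close>
    by (simp add: nn_integral_cmult_indicator emeasure_eq_measure A_def poisson_distributed_def ennreal_mult'' del: times_divide_eq_right)
  finally show ?thesis .
qed

lemma poisson_distributed_moments:
  assumes D: "poisson_distributed M D \<mu>" and \<mu>: "0 \<le> \<mu>"
  shows "integrable M D" and "integrable M (\<lambda>\<omega>. (D \<omega>)\<^sup>2)"
    and "expectation D = \<mu>" and "expectation (\<lambda>\<omega>. (D \<omega>)\<^sup>2) = \<mu> + \<mu>\<^sup>2"
proof -
  have [measurable]: "D \<in> borel_measurable M"
    using D by (simp add: poisson_distributed_def)
  have nn_integral_moment: "(\<integral>\<^sup>+\<omega>. ennreal (g (D \<omega>)) \<partial>M) = ennreal m"
    if g[measurable]: "g \<in> borel_measurable borel" and "\<And>x. 0 \<le> x \<Longrightarrow> 0 \<le> g x"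
      and "(\<lambda>k. g (real k) * (exp (- \<mu>) * \<mu> ^ k / fact k)) sums m" for g m
    using nn_integral_poisson_distributed[OF D \<mu> g] that \<mu>
    by (simp add: suminf_ennreal2 sums_iff)
  have nonneg: "AE \<omega> in M. 0 \<le> D \<omega>"
    using AE_poisson_distributed_nat[OF D] by auto
  have "(\<integral>\<^sup>+\<omega>. ennreal (D \<omega>) \<partial>M) = ennreal \<mu>"
    using poisson_weights_sums(2)[of \<mu>] by (intro nn_integral_moment) auto
  moreover have "(\<integral>\<^sup>+\<omega>. ennreal ((D \<omega>)\<^sup>2) \<partial>M) = ennreal (\<mu> + \<mu>\<^sup>2)"
    using poisson_weights_sums(3)[of \<mu>] by (intro nn_integral_moment) auto
  ultimately show "integrable M D" "integrable M (\<lambda>\<omega>. (D \<omega>)\<^sup>2)"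
    "expectation D = \<mu>" "expectation (\<lambda>\<omega>. (D \<omega>)\<^sup>2) = \<mu> + \<mu>\<^sup>2"
    using nonneg \<mu> by (auto intro!: integrableI_nonneg simp: integral_eq_nn_integral simp flip: ennreal_plus)
qed

lemma gaussian_moments:
  assumes X: "distributed M lborel X (normal_density 0 \<sigma>)" and \<sigma>: "0 < \<sigma>"
  shows "integrable M X" and "integrable M (\<lambda>\<omega>. (X \<omega>)\<^sup>2)"
    and "expectation X = 0" and "expectation (\<lambda>\<omega>. (X \<omega>)\<^sup>2) = \<sigma>\<^sup>2"
proof -
  show "integrable M X"
    using distributed_integrable[OF X, of "\<lambda>x. x"] integrable_normal_moment_nz_1[OF \<sigma>, of 0]
    by (simp add: normal_density_nonneg)
  show "integrable M (\<lambda>\<omega>. (X \<omega>)\<^sup>2)"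
    using distributed_integrable[OF X, of "\<lambda>x. x\<^sup>2"] integrable_normal_moment[OF \<sigma>, of 0 2]
    by (simp add: normal_density_nonneg)
  show "expectation X = 0"
    using normal_distributed_expectation[OF \<sigma> X] .
  show "expectation (\<lambda>\<omega>. (X \<omega>)\<^sup>2) = \<sigma>\<^sup>2"
    using distributed_integral[OF X, of "\<lambda>x. x\<^sup>2", symmetric] integral_normal_moment_even[OF \<sigma>, of 0 1]
    by (simp add: normal_density_nonneg power2_eq_square)
qed

lemma second_moment_affine_gaussian_poisson:
  assumes indep: "indep_var borel G borel P"
    and G: "distributed M lborel G (normal_density 0 \<sigma>)" and \<sigma>: "0 < \<sigma>"
    and P: "poisson_distributed M P \<mu>" and \<mu>: "0 \<le> \<mu>"
  shows "integrable M (\<lambda>\<omega>. (K + b * G \<omega> + c * P \<omega>)\<^sup>2)"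
    and "expectation (\<lambda>\<omega>. (K + b * G \<omega> + c * P \<omega>)\<^sup>2) = (K + c * \<mu>)\<^sup>2 + b\<^sup>2 * \<sigma>\<^sup>2 + c\<^sup>2 * \<mu>"
proof -
  note G_moments = gaussian_moments[OF G \<sigma>] and P_moments = poisson_distributed_moments[OF P \<mu>]
  have GP_int: "integrable M (\<lambda>\<omega>. G \<omega> * P \<omega>)"
    by (rule indep_var_integrable[OF indep G_moments(1) P_moments(1)])
  have GP_exp: "expectation (\<lambda>\<omega>. G \<omega> * P \<omega>) = 0"
    using indep_var_lebesgue_integral[OF indep G_moments(1) P_moments(1)] G_moments(3) by simp
  have expand: "(\<lambda>\<omega>. (K + b * G \<omega> + c * P \<omega>)\<^sup>2) = (\<lambda>\<omega>. K\<^sup>2 + (b\<^sup>2 * (G \<omega>)\<^sup>2 + (c\<^sup>2 * (P \<omega>)\<^sup>2 +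
      (2 * K * b * G \<omega> + (2 * K * c * P \<omega> + 2 * b * c * (G \<omega> * P \<omega>))))))"
    by (simp add: fun_eq_iff power2_eq_square algebra_simps)
  show "integrable M (\<lambda>\<omega>. (K + b * G \<omega> + c * P \<omega>)\<^sup>2)"
    unfolding expand using G_moments P_moments GP_int by simp
  have "expectation (\<lambda>\<omega>. (K + b * G \<omega> + c * P \<omega>)\<^sup>2)
      = K\<^sup>2 + (b\<^sup>2 * \<sigma>\<^sup>2 + (c\<^sup>2 * (\<mu> + \<mu>\<^sup>2) + (2 * K * b * 0 + (2 * K * c * \<mu> + 2 * b * c * 0))))"
    unfolding expand using G_moments P_moments GP_int GP_exp
    by (simp add: integral_add integrable_add prob_space)
  also have "\<dots> = (K + c * \<mu>)\<^sup>2 + b\<^sup>2 * \<sigma>\<^sup>2 + c\<^sup>2 * \<mu>"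
    by (simp add: power2_eq_square algebra_simps)
  finally show "expectation (\<lambda>\<omega>. (K + b * G \<omega> + c * P \<omega>)\<^sup>2) = (K + c * \<mu>)\<^sup>2 + b\<^sup>2 * \<sigma>\<^sup>2 + c\<^sup>2 * \<mu>" .
qed

lemma distributed_grid_increment_brownian:
  assumes "is_brownian M W" and "0 < dt"
  shows "distributed M lborel (grid_increment dt W j) (normal_density 0 (sqrt dt))"
proof -
  have "distributed M lborel (\<lambda>\<omega>. W (real (Suc j) * dt) \<omega> - W (real j * dt) \<omega>)
      (normal_density 0 (sqrt (real (Suc j) * dt - real j * dt)))"
    using assms by (simp add: is_brownian_def)
  then show ?thesis
    by (simp add: grid_increment_def[abs_def] algebra_simps)
qed

lemma poisson_distributed_grid_increment:
  assumes "is_poisson M lam N" and "0 < dt"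
  shows "poisson_distributed M (grid_increment dt N j) (lam * dt)"
proof -
  have "measure M {\<omega> \<in> space M. N (real (Suc j) * dt) \<omega> - N (real j * dt) \<omega> = real k}
      = exp (- lam * (real (Suc j) * dt - real j * dt)) * (lam * (real (Suc j) * dt - real j * dt)) ^ k / fact k" for k
    using assms by (simp add: is_poisson_def)
  moreover have [measurable]: "N t \<in> borel_measurable M" for t
    using assms(1) by (simp add: is_poisson_def)
  then have "grid_increment dt N j \<in> borel_measurable M"
    unfolding grid_increment_def[abs_def] by measurable
  ultimately show ?thesis
    by (simp add: poisson_distributed_def grid_increment_def algebra_simps)
qed

lemma indep_vars_grid_noise:
  assumes "joint_indep M X0 W N" and "0 < dt"
  shows "indep_vars (\<lambda>_. borel) (grid_noise dt X0 W N) ({IX0} \<union> IW ` {..<k} \<union> IN ` {..<k})"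
proof -
  have "grid_noise dt X0 W N = (\<lambda>i \<omega>. case i of IX0 \<Rightarrow> X0 \<omega>
      | IW j \<Rightarrow> W (real (Suc j) * dt) \<omega> - W (real j * dt) \<omega>
      | IN j \<Rightarrow> N (real (Suc j) * dt) \<omega> - N (real j * dt) \<omega>)"
    by (auto simp: fun_eq_iff grid_noise_def grid_increment_def split: incr_idx.split)
  then show ?thesis
    using assms(1)[unfolded joint_indep_def, rule_format, of "\<lambda>j. real j * dt" k] assms(2)
    by simp
qed

lemma indep_var_grid_increments:
  assumes "joint_indep M X0 W N" and "0 < dt"
  shows "indep_var borel (grid_increment dt W n) borel (grid_increment dt N n)"
proof -
  have "indep_var (PiM {IW n} (\<lambda>_. borel)) (\<lambda>\<omega>. restrict (\<lambda>i. grid_noise dt X0 W N i \<omega>) {IW n})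
      (PiM {IN n} (\<lambda>_. borel)) (\<lambda>\<omega>. restrict (\<lambda>i. grid_noise dt X0 W N i \<omega>) {IN n})"
    by (rule indep_var_restrict[OF indep_vars_grid_noise[OF assms, of "Suc n"]]) auto
  from indep_var_compose[OF this measurable_component_singleton[OF insertI1]
      measurable_component_singleton[OF insertI1]]
  show ?thesis
    by (simp add: comp_def grid_noise_def)
qed

lemma indep_var_semi_tamed_linear_step_factor:
  assumes "joint_indep M X0 W N" and "0 < dt"
  shows "indep_var borel (semi_tamed (\<lambda>x. a * x) (\<lambda>_. 0) (\<lambda>x. b * x) (\<lambda>x. c * x) dt W N X0 n)
      borel (linear_step_factor a b c dt W N n)"
proof -
  define A where "A = {IX0} \<union> IW ` {..<n} \<union> IN ` {..<n}"
  define B where "B = {IW n, IN n}"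
  define past where "past \<omega> = restrict (\<lambda>i. grid_noise dt X0 W N i \<omega>) A" for \<omega>
  define now where "now \<omega> = restrict (\<lambda>i. grid_noise dt X0 W N i \<omega>) B" for \<omega>
  define factor where "factor f j = 1 + a * dt + b * f (IW j) + c * f (IN j)" for f :: "incr_idx \<Rightarrow> real" and j
  have "indep_var (PiM A (\<lambda>_. borel)) past (PiM B (\<lambda>_. borel)) now"
    unfolding past_def now_def
    by (rule indep_var_restrict[OF indep_vars_grid_noise[OF assms, of "Suc n"]]) (auto simp: A_def B_def)
  moreover have "(\<lambda>f. f i) \<in> borel_measurable (PiM S (\<lambda>_. borel))" if "i \<in> S" for i S
    using measurable_component_singleton[OF that, of "\<lambda>_. borel"] by simp
  then have "(\<lambda>f. f IX0 * (\<Prod>j<n. factor f j)) \<in> borel_measurable (PiM A (\<lambda>_. borel))"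
    and "(\<lambda>f. factor f n) \<in> borel_measurable (PiM B (\<lambda>_. borel))"
    by (auto simp: A_def B_def factor_def intro!: borel_measurable_times borel_measurable_prod borel_measurable_add)
  ultimately have "indep_var borel ((\<lambda>f. f IX0 * (\<Prod>j<n. factor f j)) \<circ> past) borel ((\<lambda>f. factor f n) \<circ> now)"
    by (rule indep_var_compose)
  moreover have "(\<lambda>f. f IX0 * (\<Prod>j<n. factor f j)) \<circ> past
      = semi_tamed (\<lambda>x. a * x) (\<lambda>_. 0) (\<lambda>x. b * x) (\<lambda>x. c * x) dt W N X0 n"
    by (auto simp: fun_eq_iff semi_tamed_linear past_def A_def factor_def grid_noise_def
        linear_step_factor_def intro!: prod.cong)
  moreover have "(\<lambda>f. factor f n) \<circ> now = linear_step_factor a b c dt W N n"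
    by (auto simp: fun_eq_iff now_def B_def factor_def grid_noise_def linear_step_factor_def)
  ultimately show ?thesis
    by simp
qed

lemma expectation_semi_tamed_linear_sq:
  fixes a b c :: real
  assumes W: "is_brownian M W" and N: "is_poisson M lam N" and "0 \<le> lam" and "0 < dt"
    and X0: "admissible_init M X0 W N"
  defines "Y \<equiv> semi_tamed (\<lambda>x. a * x) (\<lambda>_. 0) (\<lambda>x. b * x) (\<lambda>x. c * x) dt W N X0"
    and "q \<equiv> (1 + (a + lam * c) * dt)\<^sup>2 + (b\<^sup>2 + lam * c\<^sup>2) * dt"
  shows "integrable M (\<lambda>\<omega>. (Y n \<omega>)\<^sup>2)"
    and "expectation (\<lambda>\<omega>. (Y n \<omega>)\<^sup>2) = expectation (\<lambda>\<omega>. (X0 \<omega>)\<^sup>2) * q ^ n"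
proof -
  have J: "joint_indep M X0 W N"
    using X0 by (simp add: admissible_init_def)
  define R where "R = linear_step_factor a b c dt W N"
  have Y_Suc: "Y (Suc n) \<omega> = Y n \<omega> * R n \<omega>" for n \<omega>
    unfolding Y_def R_def semi_tamed_linear by simp
  have R_moments: "integrable M (\<lambda>\<omega>. (R n \<omega>)\<^sup>2) \<and> expectation (\<lambda>\<omega>. (R n \<omega>)\<^sup>2) = q" for n
  proof -
    note moments = second_moment_affine_gaussian_poisson[OF indep_var_grid_increments[OF J \<open>0 < dt\<close>, of n]
        distributed_grid_increment_brownian[OF W \<open>0 < dt\<close>, of n] _
        poisson_distributed_grid_increment[OF N \<open>0 < dt\<close>, of n], where K = "1 + a * dt" and b = b and c = c]
    have "(1 + a * dt + c * (lam * dt))\<^sup>2 + b\<^sup>2 * (sqrt dt)\<^sup>2 + c\<^sup>2 * (lam * dt) = q"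
      using \<open>0 < dt\<close> by (simp add: q_def algebra_simps)
    then show ?thesis
      using moments \<open>0 \<le> lam\<close> \<open>0 < dt\<close> by (simp add: R_def linear_step_factor_def[abs_def])
  qed
  have "integrable M (\<lambda>\<omega>. (Y n \<omega>)\<^sup>2) \<and> expectation (\<lambda>\<omega>. (Y n \<omega>)\<^sup>2) = expectation (\<lambda>\<omega>. (X0 \<omega>)\<^sup>2) * q ^ n"
  proof (induction n)
    case 0
    then show ?case
      using X0 by (simp add: Y_def admissible_init_def)
  next
    case (Suc n)
    have "indep_var borel ((\<lambda>x. x\<^sup>2) \<circ> Y n) borel ((\<lambda>x. x\<^sup>2) \<circ> R n)"
      unfolding Y_def R_def
      by (rule indep_var_compose[OF indep_var_semi_tamed_linear_step_factor[OF J \<open>0 < dt\<close>]]) auto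
    then have "indep_var borel (\<lambda>\<omega>. (Y n \<omega>)\<^sup>2) borel (\<lambda>\<omega>. (R n \<omega>)\<^sup>2)"
      by (simp add: comp_def)
    from indep_var_integrable[OF this] indep_var_lebesgue_integral[OF this]
    show ?case
      using Suc R_moments[of n] by (simp add: Y_Suc power_mult_distrib)
  qed
  then show "integrable M (\<lambda>\<omega>. (Y n \<omega>)\<^sup>2)"
    and "expectation (\<lambda>\<omega>. (Y n \<omega>)\<^sup>2) = expectation (\<lambda>\<omega>. (X0 \<omega>)\<^sup>2) * q ^ n"
    by auto
qed

lemma joint_indep_const_init:
  assumes "joint_indep M (\<lambda>_. x) W N"
  shows "joint_indep M (\<lambda>_. y) W N"
  unfolding joint_indep_def
proof (intro allI impI)
  fix ts :: "nat \<Rightarrow> real" and k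
  assume "0 \<le> ts 0 \<and> (\<forall>j<k. ts j < ts (Suc j))"
  then have "indep_vars (\<lambda>_. borel)
      (\<lambda>i \<omega>. case i of IX0 \<Rightarrow> x | IW j \<Rightarrow> W (ts (Suc j)) \<omega> - W (ts j) \<omega> | IN j \<Rightarrow> N (ts (Suc j)) \<omega> - N (ts j) \<omega>)
      ({IX0} \<union> IW ` {..<k} \<union> IN ` {..<k})"
    using assms by (simp add: joint_indep_def)
  then have "indep_vars (\<lambda>_. borel)
      (\<lambda>i \<omega>. (case i of IX0 \<Rightarrow> (\<lambda>z. z + (y - x)) | _ \<Rightarrow> id)
        (case i of IX0 \<Rightarrow> x | IW j \<Rightarrow> W (ts (Suc j)) \<omega> - W (ts j) \<omega> | IN j \<Rightarrow> N (ts (Suc j)) \<omega> - N (ts j) \<omega>))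
      ({IX0} \<union> IW ` {..<k} \<union> IN ` {..<k})"
    by (rule indep_vars_compose2) (auto split: incr_idx.split)
  moreover have "(\<lambda>i \<omega>. (case i of IX0 \<Rightarrow> (\<lambda>z. z + (y - x)) | _ \<Rightarrow> id)
        (case i of IX0 \<Rightarrow> x | IW j \<Rightarrow> W (ts (Suc j)) \<omega> - W (ts j) \<omega> | IN j \<Rightarrow> N (ts (Suc j)) \<omega> - N (ts j) \<omega>))
      = (\<lambda>i \<omega>. case i of IX0 \<Rightarrow> y | IW j \<Rightarrow> W (ts (Suc j)) \<omega> - W (ts j) \<omega> | IN j \<Rightarrow> N (ts (Suc j)) \<omega> - N (ts j) \<omega>)"
    by (auto simp: fun_eq_iff split: incr_idx.split)
  ultimately show "indep_vars (\<lambda>_. borel)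
      (\<lambda>i \<omega>. case i of IX0 \<Rightarrow> y | IW j \<Rightarrow> W (ts (Suc j)) \<omega> - W (ts j) \<omega> | IN j \<Rightarrow> N (ts (Suc j)) \<omega> - N (ts j) \<omega>)
      ({IX0} \<union> IW ` {..<k} \<union> IN ` {..<k})"
    by simp
qed

lemma ms_stable_semi_tamed_linear_iff:
  assumes W: "is_brownian M W" and N: "is_poisson M lam N" and "0 \<le> lam" and "0 < dt"
    and "joint_indep M (\<lambda>_. 0) W N"
  shows "ms_stable M (\<lambda>x. a * x) (\<lambda>_. 0) (\<lambda>x. b * x) (\<lambda>x. c * x) dt W N
    \<longleftrightarrow> (1 + (a + lam * c) * dt)\<^sup>2 + (b\<^sup>2 + lam * c\<^sup>2) * dt < 1"
    (is "?stable \<longleftrightarrow> ?q < 1")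
proof -
  note moment = expectation_semi_tamed_linear_sq(2)[OF W N \<open>0 \<le> lam\<close> \<open>0 < dt\<close>, of _ a b c]
  have one: "admissible_init M (\<lambda>_. 1) W N"
    using joint_indep_const_init[OF \<open>joint_indep M (\<lambda>_. 0) W N\<close>] by (simp add: admissible_init_def)
  have "?q < 1" if ?stable
  proof -
    have "(\<lambda>n. ?q ^ n) \<longlonglongrightarrow> 0"
      using that[unfolded ms_stable_def, rule_format, OF one] moment[OF one] by (simp add: prob_space)
    then show ?thesis
      using LIMSEQ_le_const[of "\<lambda>n. ?q ^ n" 0 1] by (force simp: one_le_power)
  qed
  moreover have ?stable if "?q < 1"
  proof -
    have "0 \<le> ?q"
      using \<open>0 \<le> lam\<close> \<open>0 < dt\<close> by simp
    then have "(\<lambda>n. ?q ^ n) \<longlonglongrightarrow> 0"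
      using that by (intro LIMSEQ_power_zero) simp
    then show ?thesis
      using moment by (simp add: ms_stable_def tendsto_mult_right_zero)
  qed
  ultimately show ?thesis
    by blast
qed

end

theorem mainTheorem1:
  fixes M :: "'a measure" and W N :: "real \<Rightarrow> 'a \<Rightarrow> real"
    and a b c lam dt :: real
  assumes "prob_space M"
    and "lam > 0" and "dt > 0"
    and "is_brownian M W" and "is_poisson M lam N"
    and "joint_indep M (\<lambda>_. 0) W N"
    and "2 * a + b\<^sup>2 + lam * c * (2 + c) < 0"
  shows "a + lam * c < 0 \<and>
    (ms_stable M (\<lambda>x. a * x) (\<lambda>_. 0) (\<lambda>x. b * x) (\<lambda>x. c * x) dt W N
       \<longleftrightarrow> dt < - (2 * a + b\<^sup>2 + lam * c * (2 + c)) / (a + lam * c)\<^sup>2)"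
proof -
  define l where "l = 2 * a + b\<^sup>2 + lam * c * (2 + c)"
  define s where "s = a + lam * c"
  have l_eq: "l = 2 * s + b\<^sup>2 + lam * c\<^sup>2"
    by (simp add: l_def s_def power2_eq_square algebra_simps)
  have "0 \<le> b\<^sup>2 + lam * c\<^sup>2"
    using \<open>lam > 0\<close> by simp
  then have "s < 0"
    using assms(7) l_eq by (simp add: l_def)
  have "(1 + s * dt)\<^sup>2 + (b\<^sup>2 + lam * c\<^sup>2) * dt = 1 + dt * (s\<^sup>2 * dt + l)"
    by (simp add: l_eq power2_eq_square algebra_simps)
  also have "\<dots> < 1 \<longleftrightarrow> s\<^sup>2 * dt + l < 0"
    using \<open>dt > 0\<close> by (simp add: mult_less_0_iff)
  also have "\<dots> \<longleftrightarrow> dt < - l / s\<^sup>2"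
    using pos_less_divide_eq[of "s\<^sup>2" dt "- l"] \<open>s < 0\<close> by (simp add: mult.commute) linarith
  finally show ?thesis
    using prob_space.ms_stable_semi_tamed_linear_iff[OF assms(1,4,5) _ \<open>dt > 0\<close> assms(6), of a b c]
      \<open>s < 0\<close> \<open>lam > 0\<close> by (simp add: l_def s_def)
qed

end
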